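(* Let $d>0$, $n\in\mathbb{N}$, and let $\phi_\nu, W_\nu$, $\nu=1,\ldots,n$, be continuous complex-valued functions on $[0,d]$ such that $W_n(0)=1$ and, for every $d_1$ with $0<d_1\le d$, the system $\{\phi_\nu\}_{\nu=1}^n$ is linearly independent on $[0,d_1]$. Then the operator $R$ in $L_2[0,d]$ given by $$(Rg)(x)=\sum_{\nu=1}^n\phi_\nu(x)\int_0^x W_\nu(\xi)g(\xi)\,d\xi$$ is infinite-dimensional, i.e. its range is not a finite-dimensional linear subspace. *)

theory Defs
  imports "HOL-Analysis.Analysis"
begin

definition lin_indep_on :: "real set \<Rightarrow> nat \<Rightarrow> (nat \<Rightarrow> real \<Rightarrow> complex) \<Rightarrow> bool" where
  "lin_indep_on S n f \<longleftrightarrow>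
     (\<forall>c :: nat \<Rightarrow> complex. (\<forall>x\<in>S. (\<Sum>i=1..n. c i * f i x) = 0) \<longrightarrow> (\<forall>i\<in>{1..n}. c i = 0))"

definition L2_on :: "real set \<Rightarrow> (real \<Rightarrow> complex) \<Rightarrow> bool" where
  "L2_on S g \<longleftrightarrow> g \<in> borel_measurable (lebesgue_on S)
      \<and> integrable (lebesgue_on S) (\<lambda>x. (cmod (g x))\<^sup>2)"

definition volterra_op ::
  "nat \<Rightarrow> (nat \<Rightarrow> real \<Rightarrow> complex) \<Rightarrow> (nat \<Rightarrow> real \<Rightarrow> complex) \<Rightarrow> (real \<Rightarrow> complex) \<Rightarrow> real \<Rightarrow> complex" where
  "volterra_op n \<phi> W g x =
     (\<Sum>\<nu>=1..n. \<phi> \<nu> x * integral\<^sup>L (lebesgue_on {0..x}) (\<lambda>\<xi>. W \<nu> \<xi> * g \<xi>))"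

definition finite_dim_range_on ::
  "real set \<Rightarrow> ((real \<Rightarrow> complex) \<Rightarrow> real \<Rightarrow> complex) \<Rightarrow> bool" where
  "finite_dim_range_on S R \<longleftrightarrow>
     (\<exists>(m::nat) (h :: nat \<Rightarrow> real \<Rightarrow> complex). \<forall>g. L2_on S g \<longrightarrow>
        (\<exists>c :: nat \<Rightarrow> complex. \<forall>x\<in>S. R g x = (\<Sum>i<m. c i * h i x)))"

end

(*
  Suppose the range of R lies in a finite-dimensional space. The sets V t of values R g
  for g vanishing on [0, t) shrink as t grows, and the dimension of their spans is bounded,
  so they stabilise near 0: for t <= t0, V t lies in the span of V t0, whose elements vanish
  on [0, t0). Applying this to the indicator of [t, s] shows that the kernel
  K(x, xi) = sum_nu phi_nu(x) W_nu(xi) has integral 0 over every [t, s] with 0 < t <= s <= x < t0.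
  Hence K(x, 0) = sum_nu W_nu(0) phi_nu(x) vanishes on [0, t0], a linear relation among the
  phi_nu that is nontrivial because W_n(0) = 1.
*)

theory Submission
  imports Defs "HOL-Library.Function_Algebras"
begin

lemma (in vector_space) antitone_family_span_stabilizes:
  fixes V :: "'i::linorder \<Rightarrow> 'b set"
  assumes "finite T" and "I \<noteq> {}"
    and V_span: "\<And>t. t \<in> I \<Longrightarrow> V t \<subseteq> span T"
    and V_antitone: "\<And>t t'. t \<le> t' \<Longrightarrow> V t' \<subseteq> V t"
  obtains t0 where "t0 \<in> I" and "\<And>t. t \<in> I \<Longrightarrow> t \<le> t0 \<Longrightarrow> V t \<subseteq> span (V t0)"
proof -
  define C where "C = {card S | S t. t \<in> I \<and> S \<subseteq> V t \<and> independent S}"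
  have indep_bound: "finite S \<and> card S \<le> card T" if "t \<in> I" "S \<subseteq> V t" "independent S" for S t
    using independent_span_bound[OF \<open>finite T\<close> that(3)] V_span[OF that(1)] that(2) by blast
  have "finite C"
    using indep_bound by (intro finite_subset[of C "{..card T}"]) (auto simp: C_def)
  moreover obtain i where "i \<in> I"
    using \<open>I \<noteq> {}\<close> by blast
  then have "card {} \<in> C"
    unfolding C_def using independent_empty by (intro CollectI exI[of _ "{} :: 'b set"] exI[of _ i]) auto
  ultimately have "Max C \<in> C"
    by (intro Max_in) auto
  then obtain S0 t0 where S0: "card S0 = Max C" "t0 \<in> I" "S0 \<subseteq> V t0" "independent S0"
    unfolding C_def mem_Collect_eq by metis
  have "V t \<subseteq> span S0" if "t \<in> I" "t \<le> t0" for t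
  proof
    fix f assume "f \<in> V t"
    show "f \<in> span S0"
    proof (rule ccontr)
      assume "f \<notin> span S0"
      then have "independent (insert f S0)" "f \<notin> S0"
        using independent_insertI[OF _ S0(4)] span_base by blast+
      moreover have "insert f S0 \<subseteq> V t"
        using S0(3) V_antitone[OF \<open>t \<le> t0\<close>] \<open>f \<in> V t\<close> by blast
      ultimately have "card (insert f S0) \<in> C"
        unfolding C_def using \<open>t \<in> I\<close> by blast
      then have "card (insert f S0) \<le> card S0"
        using \<open>finite C\<close> S0(1) by simp
      then show False
        using indep_bound[OF S0(2-4)] \<open>f \<notin> S0\<close> by simp
    qed
  qed
  then show ?thesis
    using that[OF S0(2)] span_mono[OF S0(3)] by blast
qed

interpretation cfun: vector_space "\<lambda>(c::complex) (f::real \<Rightarrow> complex) x. c * f x"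
  by unfold_locales (auto simp: fun_eq_iff algebra_simps)

lemma cfun_subspace_vanishing_on: "cfun.subspace {f. \<forall>x\<in>A. f x = 0}"
  by (auto simp: cfun.subspace_def)

lemma sum_fun_apply: "sum F A x = (\<Sum>a\<in>A. F a x)"
  by (induction A rule: infinite_finite_induct) auto

lemma finite_dim_range_on_span:
  assumes "finite_dim_range_on S R"
  obtains T where "finite T"
    and "\<And>g. L2_on S g \<Longrightarrow> (\<lambda>x. if x \<in> S then R g x else 0) \<in> cfun.span T"
proof -
  obtain m :: nat and h where mh: "\<forall>g. L2_on S g \<longrightarrow> (\<exists>c. \<forall>x\<in>S. R g x = (\<Sum>i<m. c i * h i x))"
    using assms unfolding finite_dim_range_on_def by blast
  define T where "T = (\<lambda>i x. if x \<in> S then h i x else 0) ` {..<m}"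
  have "(\<lambda>x. if x \<in> S then R g x else 0) \<in> cfun.span T" if "L2_on S g" for g
  proof -
    obtain c where c: "\<forall>x\<in>S. R g x = (\<Sum>i<m. c i * h i x)"
      using mh \<open>L2_on S g\<close> by blast
    have "(\<lambda>x. if x \<in> S then R g x else 0) = (\<Sum>i<m. (\<lambda>x. c i * (if x \<in> S then h i x else 0)))"
      using c by (auto simp: fun_eq_iff sum_fun_apply)
    also have "\<dots> \<in> cfun.span T"
      by (intro cfun.span_sum cfun.span_scale cfun.span_base) (auto simp: T_def)
    finally show ?thesis .
  qed
  then show ?thesis
    using that[of T] by (simp add: T_def)
qed

lemma L2_on_indicator_interval:
  assumes "S \<in> sets lebesgue"
  shows "L2_on S (indicator {t..s} :: real \<Rightarrow> complex)"
proof -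
  have "(\<lambda>x. (cmod (indicator {t..s} x :: complex))\<^sup>2) = indicator {t..s}"
    by (auto simp: indicator_def fun_eq_iff)
  moreover have "integrable (lebesgue_on S) (indicator {t..s} :: real \<Rightarrow> real)"
  proof -
    have "emeasure lebesgue ({t..s} \<inter> S) \<le> emeasure lebesgue {t..s}"
      using assms by (intro emeasure_mono) auto
    then have "emeasure lebesgue ({t..s} \<inter> S) < \<infinity>"
      by (rule le_less_trans) (simp add: emeasure_lborel_Icc_eq)
    then show ?thesis
      using assms by (subst integrable_indicator_iff) (auto simp: emeasure_restrict_space sets_restrict_space_iff)
  qed
  moreover have "(indicator {t..s} :: real \<Rightarrow> complex) \<in> borel_measurable (lebesgue_on S)"
    by (intro measurable_restrict_space1 borel_measurable_indicator) auto
  ultimately show ?thesis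
    unfolding L2_on_def by simp
qed

lemma volterra_op_eq_0_below:
  assumes "\<And>\<xi>. \<xi> < t \<Longrightarrow> g \<xi> = 0" and "x < t"
  shows "volterra_op n \<phi> W g x = 0"
proof -
  have "integral\<^sup>L (lebesgue_on {0..x}) (\<lambda>\<xi>. W \<nu> \<xi> * g \<xi>) = integral\<^sup>L (lebesgue_on {0..x}) (\<lambda>\<xi>. 0)"
    for \<nu> using assms by (intro Bochner_Integration.integral_cong) auto
  then show ?thesis
    by (simp add: volterra_op_def)
qed

lemma lebesgue_integral_mult_indicator:
  fixes w :: "real \<Rightarrow> complex"
  assumes "continuous_on {t..s} w" and "{t..s} \<subseteq> {a..b}"
  shows "integral\<^sup>L (lebesgue_on {a..b}) (\<lambda>\<xi>. w \<xi> * indicator {t..s} \<xi>) = integral {t..s} w"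
proof -
  let ?f = "\<lambda>\<xi>. w \<xi> * indicator {t..s} \<xi>"
  have f_eq: "?f = (\<lambda>\<xi>. if \<xi> \<in> {t..s} then w \<xi> else 0)"
    by (auto simp: indicator_def fun_eq_iff)
  have f_restrict_eq: "(\<lambda>\<xi>. if \<xi> \<in> {a..b} then ?f \<xi> else 0) = (\<lambda>\<xi>. if \<xi> \<in> {t..s} then w \<xi> else 0)"
    using assms(2) by (auto simp: indicator_def fun_eq_iff)
  have "w absolutely_integrable_on {t..s}"
    using assms(1) absolutely_integrable_continuous_real by blast
  then have "?f absolutely_integrable_on {a..b}"
    using absolutely_integrable_restrict_UNIV[of "{a..b}" ?f] absolutely_integrable_restrict_UNIV[of "{t..s}" w]
    unfolding f_restrict_eq by simp
  then have "integral\<^sup>L (lebesgue_on {a..b}) ?f = integral {a..b} ?f"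
    by (intro lebesgue_integral_eq_integral) (auto simp: integrable_restrict_space set_integrable_def)
  also have "\<dots> = integral ({t..s} \<inter> {a..b}) w"
    unfolding f_eq by (rule integral_restrict_Int)
  also have "{t..s} \<inter> {a..b} = {t..s}"
    using assms(2) by blast
  finally show ?thesis .
qed

lemma volterra_op_indicator:
  assumes "0 \<le> t" "t \<le> s" "s \<le> x"
    and W_cont: "\<And>\<nu>. \<nu> \<in> {1..n} \<Longrightarrow> continuous_on {t..s} (W \<nu>)"
  shows "volterra_op n \<phi> W (indicator {t..s}) x = integral {t..s} (\<lambda>\<xi>. \<Sum>\<nu>=1..n. \<phi> \<nu> x * W \<nu> \<xi>)"
proof -
  have "integral\<^sup>L (lebesgue_on {0..x}) (\<lambda>\<xi>. W \<nu> \<xi> * indicator {t..s} \<xi>) = integral {t..s} (W \<nu>)"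
    if "\<nu> \<in> {1..n}" for \<nu>
    using assms W_cont[OF that] by (intro lebesgue_integral_mult_indicator) auto
  then have "volterra_op n \<phi> W (indicator {t..s}) x = (\<Sum>\<nu>=1..n. \<phi> \<nu> x * integral {t..s} (W \<nu>))"
    by (simp add: volterra_op_def)
  also have "\<dots> = integral {t..s} (\<lambda>\<xi>. \<Sum>\<nu>=1..n. \<phi> \<nu> x * W \<nu> \<xi>)"
    using W_cont by (subst integral_sum) (auto intro!: integrable_continuous_real continuous_on_mult_left)
  finally show ?thesis .
qed

lemma interval_integrals_eq_0_imp_eq_0:
  fixes w :: "real \<Rightarrow> 'a::banach"
  assumes "continuous_on {a..b} w" and "a < b"
    and integrals_0: "\<And>t s. a < t \<Longrightarrow> t \<le> s \<Longrightarrow> s \<le> b \<Longrightarrow> integral {t..s} w = 0"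
    and "\<xi> \<in> {a..b}"
  shows "w \<xi> = 0"
proof -
  have "w \<xi> = 0" if "\<xi> \<in> {a<..b}" for \<xi>
  proof -
    define c where "c = (a + \<xi>) / 2"
    have c: "a < c" "c < \<xi>" "\<xi> \<le> b"
      using that by (auto simp: c_def)
    have deriv: "((\<lambda>u. integral {c..u} w) has_vector_derivative w \<xi>) (at \<xi> within {c..b})"
      using c by (intro integral_has_vector_derivative continuous_on_subset[OF assms(1)]) auto
    have "0 = integral {c..u} w" if "u \<in> {c..b}" for u
      using c that by (intro integrals_0[symmetric]) auto
    then have "((\<lambda>u. 0) has_vector_derivative w \<xi>) (at \<xi> within {c..b})"
      using c by (intro has_vector_derivative_transform[OF _ _ deriv]) auto
    then show "w \<xi> = 0"
      using c vector_derivative_unique_within_closed_interval[of c b \<xi> "\<lambda>u. 0" "w \<xi>" 0]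
      by (simp add: has_vector_derivative_const)
  qed
  moreover have "closure {a<..b} = {a..b}"
    using \<open>a < b\<close> by simp
  ultimately show ?thesis
    using continuous_constant_on_closure[of "{a<..b}" w 0 \<xi>] assms(1,4) by simp
qed

lemma finite_dim_range_on_volterra_kernel_integrals_vanish:
  assumes "finite_dim_range_on {0..d} (volterra_op n \<phi> W)" and "d > 0"
    and W_cont: "\<And>\<nu>. \<nu> \<in> {1..n} \<Longrightarrow> continuous_on {0..d} (W \<nu>)"
  obtains t0 where "t0 \<in> {0<..d}"
    and "\<And>t s x. 0 < t \<Longrightarrow> t \<le> s \<Longrightarrow> s \<le> x \<Longrightarrow> x < t0 \<Longrightarrow>
           integral {t..s} (\<lambda>\<xi>. \<Sum>\<nu>=1..n. \<phi> \<nu> x * W \<nu> \<xi>) = 0"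
proof -
  let ?R = "\<lambda>g x. if x \<in> {0..d} then volterra_op n \<phi> W g x else 0"
  obtain T where "finite T" and R_span: "\<And>g. L2_on {0..d} g \<Longrightarrow> ?R g \<in> cfun.span T"
    using finite_dim_range_on_span[OF assms(1)] by blast
  define V where "V t = {?R g | g. L2_on {0..d} g \<and> (\<forall>\<xi><t. g \<xi> = 0)}" for t :: real
  have V_span: "V t \<subseteq> cfun.span T" for t
    using R_span by (auto simp: V_def)
  have V_antitone: "V t' \<subseteq> V t" if "t \<le> t'" for t t'
    using that by (fastforce simp: V_def)
  obtain t0 where t0: "t0 \<in> {0<..d}"
    and V_stable: "\<And>t. t \<in> {0<..d} \<Longrightarrow> t \<le> t0 \<Longrightarrow> V t \<subseteq> cfun.span (V t0)"
    using cfun.antitone_family_span_stabilizes[where I="{0<..d}" and V=V, OF \<open>finite T\<close> _ V_span V_antitone]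
      \<open>d > 0\<close> by auto
  have "V t0 \<subseteq> {f. \<forall>x\<in>{..<t0}. f x = 0}"
    unfolding V_def using volterra_op_eq_0_below by fastforce
  then have span_V_t0: "cfun.span (V t0) \<subseteq> {f. \<forall>x\<in>{..<t0}. f x = 0}"
    by (rule cfun.span_minimal[OF _ cfun_subspace_vanishing_on])
  have "integral {t..s} (\<lambda>\<xi>. \<Sum>\<nu>=1..n. \<phi> \<nu> x * W \<nu> \<xi>) = 0"
    if "0 < t" "t \<le> s" "s \<le> x" "x < t0" for t s x
  proof -
    have "?R (indicator {t..s}) \<in> V t"
      unfolding V_def using \<open>0 < t\<close> by (auto intro!: L2_on_indicator_interval)
    moreover have "V t \<subseteq> cfun.span (V t0)"
      using V_stable t0 that by auto
    ultimately have "?R (indicator {t..s}) x = 0"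
      using span_V_t0 \<open>x < t0\<close> by blast
    moreover have W_cont_ts: "continuous_on {t..s} (W \<nu>)" if "\<nu> \<in> {1..n}" for \<nu>
      using \<open>0 < t\<close> \<open>s \<le> x\<close> \<open>x < t0\<close> t0 by (intro continuous_on_subset[OF W_cont[OF that]]) auto
    ultimately show ?thesis
      using that t0 volterra_op_indicator[OF _ _ _ W_cont_ts, where \<phi>=\<phi> and x=x] by simp
  qed
  with t0 that show ?thesis
    by blast
qed

theorem lemma2:
  fixes d :: real and n :: nat
    and \<phi> W :: "nat \<Rightarrow> real \<Rightarrow> complex"
  assumes "d > 0"
    and "n \<ge> 1"
    and "\<And>\<nu>. \<nu> \<in> {1..n} \<Longrightarrow> continuous_on {0..d} (\<phi> \<nu>)"
    and "\<And>\<nu>. \<nu> \<in> {1..n} \<Longrightarrow> continuous_on {0..d} (W \<nu>)"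
    and "W n 0 = 1"
    and "\<And>d1. 0 < d1 \<Longrightarrow> d1 \<le> d \<Longrightarrow> lin_indep_on {0..d1} n \<phi>"
  shows "\<not> finite_dim_range_on {0..d} (volterra_op n \<phi> W)"
proof
  assume "finite_dim_range_on {0..d} (volterra_op n \<phi> W)"
  then obtain t0 where t0: "t0 \<in> {0<..d}"
    and integrals_0: "\<And>t s x. 0 < t \<Longrightarrow> t \<le> s \<Longrightarrow> s \<le> x \<Longrightarrow> x < t0 \<Longrightarrow>
           integral {t..s} (\<lambda>\<xi>. \<Sum>\<nu>=1..n. \<phi> \<nu> x * W \<nu> \<xi>) = 0"
    using finite_dim_range_on_volterra_kernel_integrals_vanish \<open>d > 0\<close> assms(4) by blast
  have kernel_0: "(\<Sum>\<nu>=1..n. \<phi> \<nu> x * W \<nu> 0) = 0" if "x \<in> {0<..<t0}" for x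
  proof (rule interval_integrals_eq_0_imp_eq_0[where w="\<lambda>\<xi>. \<Sum>\<nu>=1..n. \<phi> \<nu> x * W \<nu> \<xi>" and b=x])
    show "continuous_on {0..x} (\<lambda>\<xi>. \<Sum>\<nu>=1..n. \<phi> \<nu> x * W \<nu> \<xi>)"
      using that t0 by (intro continuous_on_sum continuous_on_mult_left continuous_on_subset[OF assms(4)]) auto
  qed (use that integrals_0 in auto)
  have "(\<Sum>\<nu>=1..n. W \<nu> 0 * \<phi> \<nu> x) = 0" if "x \<in> {0..t0}" for x
  proof (rule continuous_constant_on_closure[where S="{0<..<t0}" and f="\<lambda>x. \<Sum>\<nu>=1..n. W \<nu> 0 * \<phi> \<nu> x"])
    show "continuous_on (closure {0<..<t0}) (\<lambda>x. \<Sum>\<nu>=1..n. W \<nu> 0 * \<phi> \<nu> x)"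
      using t0 by (simp, intro continuous_on_sum continuous_on_mult_left continuous_on_subset[OF assms(3)]) auto
  qed (use that t0 kernel_0 in \<open>auto simp: mult.commute\<close>)
  moreover have "lin_indep_on {0..t0} n \<phi>"
    using assms(6) t0 by simp
  ultimately have "\<forall>\<nu>\<in>{1..n}. W \<nu> 0 = 0"
    unfolding lin_indep_on_def by (auto dest: spec[where x="\<lambda>\<nu>. W \<nu> 0"])
  with \<open>n \<ge> 1\<close> \<open>W n 0 = 1\<close> show False
    by simp
qed

end
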